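(* Let $G$ be a median graph in $\mathcal{U}_3$ with $n\ge 3$ vertices and $v_0$ its unique vertex lying in every majority halfspace. If $u,v$ are vertices different from $v_0$ with $L_{v_0,u}\cap L_{v_0,v}=\emptyset$, then $v_0\in I(u,v)$, i.e. $d(u,v)=d(u,v_0)+d(v_0,v)$.
   Context: Graphs are finite, simple, connected, undirected; $d$ is shortest-path distance; $I(u,v)=\{x:d(u,x)+d(x,v)=d(u,v)\}$; a graph is median if every triple $x,y,z$ has $|I(x,y)\cap I(y,z)\cap I(z,x)|=1$. $\Theta$-classes: classes of the reflexive–transitive closure of the relation on edges "opposite edges of a 4-cycle"; deleting a $\Theta$-class $E_i$ of a median graph leaves two components with vertex sets (halfspaces) $H_i',H_i''$. $\mathcal{U}_3$ is the family of median graphs with $n$ vertices in which every $\Theta$-class satisfies $\min\{|H_i'|,|H_i''|\}<n/3$; the larger halfspace is the majority halfspace. For $u\ne v$, the ladder set $L_{u,v}$ is the set of $\Theta$-classes $E_i$ such that $u,v$ lie in different halfspaces of $E_i$ and $u$ is an endpoint of an edge of $E_i$. *)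

theory Defs
  imports Main
begin

definition simple_graph :: "'a set \<Rightarrow> ('a \<Rightarrow> 'a \<Rightarrow> bool) \<Rightarrow> bool" where
  "simple_graph V E \<longleftrightarrow> finite V \<and> (\<forall>x y. E x y \<longrightarrow> x \<in> V \<and> y \<in> V)
     \<and> (\<forall>x y. E x y \<longrightarrow> E y x) \<and> (\<forall>x. \<not> E x x)"

definition is_walk :: "('a \<Rightarrow> 'a \<Rightarrow> bool) \<Rightarrow> 'a list \<Rightarrow> bool" where
  "is_walk E xs \<longleftrightarrow> xs \<noteq> [] \<and> (\<forall>i. Suc i < length xs \<longrightarrow> E (xs ! i) (xs ! Suc i))"

definition connected_graph :: "'a set \<Rightarrow> ('a \<Rightarrow> 'a \<Rightarrow> bool) \<Rightarrow> bool" where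
  "connected_graph V E \<longleftrightarrow> (\<forall>u\<in>V. \<forall>v\<in>V. \<exists>xs. is_walk E xs \<and> hd xs = u \<and> last xs = v)"

definition dist :: "('a \<Rightarrow> 'a \<Rightarrow> bool) \<Rightarrow> 'a \<Rightarrow> 'a \<Rightarrow> nat" where
  "dist E u v = (LEAST n. \<exists>xs. is_walk E xs \<and> hd xs = u \<and> last xs = v \<and> length xs = Suc n)"

definition interval :: "'a set \<Rightarrow> ('a \<Rightarrow> 'a \<Rightarrow> bool) \<Rightarrow> 'a \<Rightarrow> 'a \<Rightarrow> 'a set" where
  "interval V E u v = {x \<in> V. dist E u x + dist E x v = dist E u v}"

definition median_graph :: "'a set \<Rightarrow> ('a \<Rightarrow> 'a \<Rightarrow> bool) \<Rightarrow> bool" where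
  "median_graph V E \<longleftrightarrow> simple_graph V E \<and> connected_graph V E \<and> V \<noteq> {} \<and>
     (\<forall>x\<in>V. \<forall>y\<in>V. \<forall>z\<in>V.
        card (interval V E x y \<inter> interval V E y z \<inter> interval V E z x) = 1)"

definition edges :: "('a \<Rightarrow> 'a \<Rightarrow> bool) \<Rightarrow> 'a set set" where
  "edges E = {{x, y} | x y. E x y}"

definition opposite_in_C4 :: "('a \<Rightarrow> 'a \<Rightarrow> bool) \<Rightarrow> 'a set \<Rightarrow> 'a set \<Rightarrow> bool" where
  "opposite_in_C4 E e f \<longleftrightarrow> (\<exists>a b c d. distinct [a, b, c, d] \<and>
     E a b \<and> E b c \<and> E c d \<and> E d a \<and> e = {a, b} \<and> f = {c, d})"

definition Theta :: "('a \<Rightarrow> 'a \<Rightarrow> bool) \<Rightarrow> 'a set \<Rightarrow> 'a set \<Rightarrow> bool" where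
  "Theta E = (opposite_in_C4 E)\<^sup>*\<^sup>*"

definition theta_classes :: "('a \<Rightarrow> 'a \<Rightarrow> bool) \<Rightarrow> 'a set set set" where
  "theta_classes E = {{f \<in> edges E. Theta E e f} | e. e \<in> edges E}"

definition component_without :: "'a set \<Rightarrow> ('a \<Rightarrow> 'a \<Rightarrow> bool) \<Rightarrow> 'a set set \<Rightarrow> 'a \<Rightarrow> 'a set" where
  "component_without V E F x = {y \<in> V. \<exists>xs. is_walk E xs \<and> hd xs = x \<and> last xs = y \<and>
      (\<forall>i. Suc i < length xs \<longrightarrow> {xs ! i, xs ! Suc i} \<notin> F)}"

definition halfspaces :: "'a set \<Rightarrow> ('a \<Rightarrow> 'a \<Rightarrow> bool) \<Rightarrow> 'a set set \<Rightarrow> 'a set set" where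
  "halfspaces V E F = component_without V E F ` V"

definition majority_halfspace :: "'a set \<Rightarrow> ('a \<Rightarrow> 'a \<Rightarrow> bool) \<Rightarrow> 'a set set \<Rightarrow> 'a set \<Rightarrow> bool" where
  "majority_halfspace V E F H \<longleftrightarrow> H \<in> halfspaces V E F \<and>
     (\<forall>H' \<in> halfspaces V E F. card H' \<le> card H)"

definition in_U3 :: "'a set \<Rightarrow> ('a \<Rightarrow> 'a \<Rightarrow> bool) \<Rightarrow> bool" where
  "in_U3 V E \<longleftrightarrow> median_graph V E \<and>
     (\<forall>F \<in> theta_classes E. \<exists>H \<in> halfspaces V E F. 3 * card H < card V)"

definition ladder_set :: "'a set \<Rightarrow> ('a \<Rightarrow> 'a \<Rightarrow> bool) \<Rightarrow> 'a \<Rightarrow> 'a \<Rightarrow> 'a set set set" where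
  "ladder_set V E u v = {F \<in> theta_classes E.
      component_without V E F u \<noteq> component_without V E F v \<and> (\<exists>e \<in> F. u \<in> e)}"

end

theory Submission
  imports Defs
begin

text \<open>Let \<open>m\<close> be the median of \<open>v\<^sub>0, u, v\<close>. If \<open>m \<noteq> v\<^sub>0\<close>, pick the neighbour \<open>x\<close> of \<open>v\<^sub>0\<close> on a
  geodesic from \<open>v\<^sub>0\<close> to \<open>m\<close>. Every vertex \<open>w\<close> with \<open>m \<in> I(v\<^sub>0, w)\<close> is then at least as close
  to \<open>x\<close> as to \<open>v\<^sub>0\<close>. An edge leaving the set \<open>{w. d(v\<^sub>0,w) < d(x,w)}\<close> is \<open>\<Theta>\<close>-related to \<open>v\<^sub>0x\<close>
  (induction on the distance, completing 4-cycles by medians), so the \<open>\<Theta>\<close>-class of \<open>v\<^sub>0x\<close>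
  separates \<open>v\<^sub>0\<close> from both \<open>u\<close> and \<open>v\<close> and lies in both ladder sets, contradicting
  their disjointness.\<close>

lemma is_walk_singleton [simp]: "is_walk E [x]"
  by (simp add: is_walk_def)

lemma is_walk_Cons_Cons: "is_walk E (x # y # xs) \<longleftrightarrow> E x y \<and> is_walk E (y # xs)"
proof
  assume "is_walk E (x # y # xs)"
  then show "E x y \<and> is_walk E (y # xs)"
    unfolding is_walk_def by (metis Suc_less_eq length_Cons nth_Cons_0 nth_Cons_Suc zero_less_Suc list.distinct(1))
next
  assume "E x y \<and> is_walk E (y # xs)"
  then show "is_walk E (x # y # xs)"
    unfolding is_walk_def by (auto simp: less_Suc_eq_0_disj nth_Cons split: nat.split)
qed

lemma is_walk_append_tl:
  "is_walk E xs \<Longrightarrow> is_walk E ys \<Longrightarrow> last xs = hd ys \<Longrightarrow> is_walk E (xs @ tl ys)"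
proof (induction xs rule: induct_list012)
  case (2 x)
  then show ?case by (cases ys) auto
next
  case (3 x y zs)
  then show ?case by (simp add: is_walk_Cons_Cons)
qed (simp add: is_walk_def)

lemma is_walk_rev:
  assumes sym: "\<And>x y. E x y \<Longrightarrow> E y x" and walk: "is_walk E xs"
  shows "is_walk E (rev xs)"
  unfolding is_walk_def
proof (intro conjI allI impI)
  show "rev xs \<noteq> []" using walk by (simp add: is_walk_def)
  fix i assume i: "Suc i < length (rev xs)"
  define j where "j = length xs - Suc (Suc i)"
  have "E (xs ! j) (xs ! Suc j)" using i walk by (simp add: is_walk_def j_def)
  moreover have "rev xs ! i = xs ! Suc j" "rev xs ! Suc i = xs ! j"
    using i by (auto simp: rev_nth Suc_diff_Suc j_def)
  ultimately show "E (rev xs ! i) (rev xs ! Suc i)" using sym by simp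
qed

locale median =
  fixes V :: "'a set" and E :: "'a \<Rightarrow> 'a \<Rightarrow> bool"
  assumes median_graph: "median_graph V E"
begin

abbreviation d where "d \<equiv> dist E"

lemma E_sym: "E x y \<Longrightarrow> E y x"
  and E_in_V: "E x y \<Longrightarrow> x \<in> V" "E x y \<Longrightarrow> y \<in> V"
  and E_irrefl: "\<not> E x x"
  using median_graph by (simp_all add: median_graph_def simple_graph_def)

lemma shortest_walk_exists:
  assumes "u \<in> V" "v \<in> V"
  obtains xs where "is_walk E xs" "hd xs = u" "last xs = v" "length xs = Suc (d u v)"
proof -
  obtain xs where xs: "is_walk E xs" "hd xs = u" "last xs = v"
    using median_graph assms unfolding median_graph_def connected_graph_def by blast
  then have "length xs = Suc (length xs - 1)" by (cases xs) (auto simp: is_walk_def)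
  with xs have "\<exists>n xs. is_walk E xs \<and> hd xs = u \<and> last xs = v \<and> length xs = Suc n" by blast
  then have "\<exists>xs. is_walk E xs \<and> hd xs = u \<and> last xs = v \<and> length xs = Suc (d u v)"
    unfolding dist_def by (rule LeastI_ex)
  then show ?thesis using that by blast
qed

lemma dist_le_walk_length:
  assumes "is_walk E xs" "hd xs = u" "last xs = v"
  shows "d u v \<le> length xs - 1"
proof -
  have "length xs = Suc (length xs - 1)" using assms by (cases xs) (auto simp: is_walk_def)
  then show ?thesis unfolding dist_def using assms by (intro Least_le) blast
qed

lemma dist_self [simp]: "d u u = 0"
  using dist_le_walk_length[of "[u]" u u] by simp

lemma dist_eq_0_imp_eq: "u \<in> V \<Longrightarrow> v \<in> V \<Longrightarrow> d u v = 0 \<Longrightarrow> u = v"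
  by (rule shortest_walk_exists[of u v]) (auto simp: length_Suc_conv)

lemma dist_edge: "E u v \<Longrightarrow> d u v = 1"
  using dist_le_walk_length[of "[u, v]" u v] dist_eq_0_imp_eq[of u v] E_in_V[of u v] E_irrefl
  by (fastforce simp: is_walk_Cons_Cons)

lemma dist_1_imp_edge: "u \<in> V \<Longrightarrow> v \<in> V \<Longrightarrow> d u v = 1 \<Longrightarrow> E u v"
  by (rule shortest_walk_exists[of u v]) (auto simp: length_Suc_conv is_walk_Cons_Cons)

lemma dist_commute:
  assumes "u \<in> V" "v \<in> V"
  shows "d u v = d v u"
proof -
  have "d x y \<le> d y x" if "x \<in> V" "y \<in> V" for x y
  proof (rule shortest_walk_exists[OF that(2,1)])
    fix xs assume xs: "is_walk E xs" "hd xs = y" "last xs = x" "length xs = Suc (d y x)"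
    then have "xs \<noteq> []" by auto
    with xs show "d x y \<le> d y x"
      using dist_le_walk_length[OF is_walk_rev[OF E_sym xs(1)]] by (simp add: hd_rev last_rev)
  qed
  with assms show ?thesis by (simp add: le_antisym)
qed

lemma dist_triangle:
  assumes "u \<in> V" "v \<in> V" "w \<in> V"
  shows "d u w \<le> d u v + d v w"
proof -
  obtain xs where xs: "is_walk E xs" "hd xs = u" "last xs = v" "length xs = Suc (d u v)"
    using shortest_walk_exists[OF assms(1,2)] by blast
  obtain ys where ys: "is_walk E ys" "hd ys = v" "last ys = w" "length ys = Suc (d v w)"
    using shortest_walk_exists[OF assms(2,3)] by blast
  have walk: "is_walk E (xs @ tl ys)" using is_walk_append_tl[OF xs(1) ys(1)] xs ys by simp
  have "hd (xs @ tl ys) = u" using xs by (cases xs) auto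
  moreover have "last (xs @ tl ys) = w" using xs ys by (cases ys) (auto simp: last_append)
  ultimately have "d u w \<le> length (xs @ tl ys) - 1" by (rule dist_le_walk_length[OF walk])
  then show ?thesis using xs ys by simp
qed

lemma dist_Suc_imp_predecessor:
  assumes "u \<in> V" "y \<in> V" "d u y = Suc k"
  obtains y' where "E y' y" "d u y' = k"
proof -
  obtain xs where xs: "is_walk E xs" "hd xs = u" "last xs = y" "length xs = Suc (Suc k)"
    using shortest_walk_exists[OF assms(1,2)] unfolding assms(3) by blast
  define y' where "y' = xs ! k"
  have "xs \<noteq> []" using xs(4) by auto
  then have "y = xs ! Suc k" using xs(3,4) by (simp add: last_conv_nth)
  then have edge: "E y' y" using xs(1,4) unfolding is_walk_def y'_def by simp
  have "is_walk E (take (Suc k) xs)"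
    using xs(1,4) unfolding is_walk_def by (simp add: min_def)
  moreover have "hd (take (Suc k) xs) = u" using xs(2) by simp
  moreover have "last (take (Suc k) xs) = y'" using xs(4) by (simp add: y'_def take_Suc_conv_app_nth)
  ultimately have "d u y' \<le> length (take (Suc k) xs) - 1" by (rule dist_le_walk_length)
  then have "d u y' \<le> k" using xs(4) by simp
  moreover have "d u y \<le> d u y' + d y' y" using dist_triangle assms E_in_V edge by blast
  ultimately show ?thesis using that edge dist_edge[OF edge] assms(3) by simp
qed

lemma median_exists:
  assumes "x \<in> V" "y \<in> V" "z \<in> V"
  obtains m where "m \<in> interval V E x y" "m \<in> interval V E y z" "m \<in> interval V E z x"
proof -
  have "card (interval V E x y \<inter> interval V E y z \<inter> interval V E z x) = 1"
    using median_graph assms unfolding median_graph_def by blast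
  then obtain m where "interval V E x y \<inter> interval V E y z \<inter> interval V E z x = {m}"
    by (rule card_1_singletonE)
  then show ?thesis using that by blast
qed

lemma interval_dist:
  "m \<in> interval V E x y \<Longrightarrow> m \<in> V \<and> d x m + d m y = d x y"
  by (simp add: interval_def)

lemma dist_neq_if_edge:
  assumes edge: "E a x" and z: "z \<in> V"
  shows "d a z \<noteq> d x z"
proof -
  have V: "a \<in> V" "x \<in> V" using edge E_in_V by auto
  obtain m where m: "m \<in> interval V E a x" "m \<in> interval V E x z" "m \<in> interval V E z a"
    using median_exists V z by blast
  have mV: "m \<in> V" and "d a m + d m x = 1" using m(1) interval_dist dist_edge[OF edge] by auto
  then have "d a m = 0 \<or> d m x = 0" by linarith
  then have "m = a \<or> m = x" using dist_eq_0_imp_eq V mV by blast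
  then show ?thesis
  proof
    assume "m = a"
    then have "d x a + d a z = d x z" using m(2) interval_dist by blast
    then show ?thesis using dist_edge[OF E_sym[OF edge]] by simp
  next
    assume "m = x"
    then have "d z x + d x a = d z a" using m(3) interval_dist by blast
    then show ?thesis using dist_edge[OF E_sym[OF edge]] dist_commute V z by simp
  qed
qed

text \<open>\<open>y'\<close> is the predecessor of \<open>y\<close> on a geodesic from \<open>a\<close>, and \<open>m\<close> is the median of
  \<open>y'\<close>, \<open>z\<close>, \<open>x\<close>.\<close>

lemma crossing_edge_square:
  assumes ax: "E a x" and yz: "E y z" and k: "d a y = Suc k"
    and y: "d a y < d x y" and z: "\<not> d a z < d x z"
  obtains y' m where "E y' m" "d a y' = k" "d a y' < d x y'" "\<not> d a m < d x m"
    "opposite_in_C4 E {y', m} {y, z}"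
proof -
  have V: "a \<in> V" "x \<in> V" "y \<in> V" "z \<in> V" using ax yz E_in_V by auto
  have d1: "d a x = 1" "d x a = 1" "d y z = 1" "d z y = 1" using dist_edge ax yz E_sym[OF ax] E_sym[OF yz] by simp_all
  have "d x y \<le> d x a + d a y" "d a z \<le> d a y + d y z" "d x y \<le> d x z + d z y"
    using dist_triangle V by blast+
  moreover have "d a z \<noteq> d x z" using dist_neq_if_edge ax V by blast
  ultimately have dxy: "d x y = k + 2" and daz: "d a z = k + 2" and dxz: "d x z = k + 1"
    using k y z d1 by linarith+
  obtain y' where y': "E y' y" "d a y' = k" using dist_Suc_imp_predecessor V k by blast
  have y'V: "y' \<in> V" using y' E_in_V by blast
  have "d y' y = 1" using dist_edge y' by blast
  moreover have "d x y' \<le> d x a + d a y'" "d x y \<le> d x y' + d y' y"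
    "d y' z \<le> d y' y + d y z" "d a z \<le> d a y' + d y' z"
    using dist_triangle V y'V by blast+
  ultimately have dxy': "d x y' = k + 1" and dy'z: "d y' z = 2"
    using d1 y' dxy daz by linarith+
  obtain m where m: "m \<in> interval V E y' z" "m \<in> interval V E z x" "m \<in> interval V E x y'"
    using median_exists y'V V by blast
  have mV: "m \<in> V" using m interval_dist by blast
  have m1: "d y' m + d m z = 2" using m(1) interval_dist dy'z by simp
  have "d z m + d m x = d z x" using m(2) interval_dist by blast
  then have m2: "d m z + d x m = k + 1"
    using dxz dist_commute[OF V(4) mV] dist_commute[OF V(4) V(2)] dist_commute[OF mV V(2)] by simp
  have m3: "d x m + d m y' = k + 1" using m(3) interval_dist dxy' by simp
  have "m \<noteq> y'" using m2 dxy' dy'z dist_commute[OF y'V V(4)] by auto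
  moreover have "m \<noteq> z" using m3 dxz dy'z dist_commute[OF y'V V(4)] by auto
  ultimately have "d y' m \<noteq> 0" "d m z \<noteq> 0" using dist_eq_0_imp_eq mV y'V V(4) by blast+
  then have dm: "d y' m = 1" "d m z = 1" using m1 by linarith+
  have edges: "E y' m" "E m z" using dist_1_imp_edge dm y'V mV V by auto
  have "d a z \<le> d a m + d m z" "d a m \<le> d a y' + d y' m" using dist_triangle V mV y'V by blast+
  then have "\<not> d a m < d x m" and dxm: "d x m = k" using daz dm y' m2 by linarith+
  have "distinct [y', m, z, y]"
    using edges yz y' daz dxm dxy E_irrefl by auto
  then have "opposite_in_C4 E {y', m} {y, z}"
    unfolding opposite_in_C4_def using edges E_sym[OF yz] E_sym[OF y'(1)]
    by (intro exI[of _ y'] exI[of _ m] exI[of _ z] exI[of _ y]) (simp add: insert_commute)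
  with \<open>\<not> d a m < d x m\<close> show ?thesis using that edges y' dxy' by simp
qed

lemma Theta_if_edge_leaves_halfspace:
  assumes ax: "E a x" and "E y z" "d a y < d x y" "\<not> d a z < d x z"
  shows "Theta E {a, x} {y, z}"
  using assms(2-)
proof (induction "d a y" arbitrary: y z)
  case 0
  have V: "a \<in> V" "x \<in> V" "y \<in> V" "z \<in> V" using ax 0 E_in_V by blast+
  have "y = a" using dist_eq_0_imp_eq[OF V(1,3)] "0.hyps" by simp
  then have "d a z = 1" using dist_edge "0.prems"(1) by blast
  moreover have "d a z \<noteq> d x z" using dist_neq_if_edge ax V by blast
  ultimately have "d x z = 0" using "0.prems"(3) by linarith
  with \<open>y = a\<close> show ?case using dist_eq_0_imp_eq[OF V(2,4)] by (simp add: Theta_def)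
next
  case (Suc k)
  obtain y' m where "E y' m" "d a y' = k" "d a y' < d x y'" "\<not> d a m < d x m"
    and opposite: "opposite_in_C4 E {y', m} {y, z}"
    using crossing_edge_square[OF ax Suc.prems(1) Suc.hyps(2)[symmetric] Suc.prems(2,3)] by blast
  then have "Theta E {a, x} {y', m}" using Suc.hyps(1) by simp
  from this opposite show ?case unfolding Theta_def by (rule rtranclp.rtrancl_into_rtrancl)
qed

lemma walk_avoiding_Theta_class_stays_closer:
  assumes ax: "E a x"
  shows "is_walk E ws \<Longrightarrow> d a (hd ws) < d x (hd ws)
    \<Longrightarrow> \<forall>i. Suc i < length ws \<longrightarrow> {ws ! i, ws ! Suc i} \<notin> {f \<in> edges E. Theta E {a, x} f}
    \<Longrightarrow> d a (last ws) < d x (last ws)"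
proof (induction ws rule: induct_list012)
  case (3 p q rest)
  have "E p q" "is_walk E (q # rest)" using "3.prems"(1) by (simp_all add: is_walk_Cons_Cons)
  moreover have "{p, q} \<notin> {f \<in> edges E. Theta E {a, x} f}" using "3.prems"(3) by force
  ultimately have "d a q < d x q"
    using Theta_if_edge_leaves_halfspace[OF ax] "3.prems"(2) unfolding edges_def by auto
  moreover have "\<forall>i. Suc i < length (q # rest) \<longrightarrow>
      {(q # rest) ! i, (q # rest) ! Suc i} \<notin> {f \<in> edges E. Theta E {a, x} f}"
    using "3.prems"(3) by (metis Suc_less_eq length_Cons nth_Cons_Suc)
  ultimately show ?case using "3.IH"(2) \<open>is_walk E (q # rest)\<close> by simp
qed (simp_all add: is_walk_def)

lemma Theta_class_in_ladder_set:
  assumes ax: "E a x" and w: "w \<in> V" "\<not> d a w < d x w"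
  shows "{f \<in> edges E. Theta E {a, x} f} \<in> ladder_set V E a w"
proof -
  let ?F = "{f \<in> edges E. Theta E {a, x} f}"
  have edge: "{a, x} \<in> edges E" using ax unfolding edges_def by blast
  have "w \<in> component_without V E ?F w"
    using w unfolding component_without_def by (intro CollectI conjI exI[of _ "[w]"]) auto
  moreover have "w \<notin> component_without V E ?F a"
  proof
    assume "w \<in> component_without V E ?F a"
    then obtain ws where ws: "is_walk E ws" "hd ws = a" "last ws = w"
      "\<forall>i. Suc i < length ws \<longrightarrow> {ws ! i, ws ! Suc i} \<notin> ?F"
      unfolding component_without_def by blast
    have "d a a < d x a" using dist_edge[OF E_sym[OF ax]] by simp
    then have "d a w < d x w"
      using walk_avoiding_Theta_class_stays_closer[OF ax ws(1) _ ws(4)] ws(2,3) by simp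
    with w(2) show False by simp
  qed
  moreover have "?F \<in> theta_classes E" using edge unfolding theta_classes_def by blast
  ultimately show ?thesis using edge unfolding ladder_set_def Theta_def by blast
qed

lemma in_interval_if_ladder_sets_disjoint:
  assumes V: "a \<in> V" "u \<in> V" "v \<in> V"
    and disjoint: "ladder_set V E a u \<inter> ladder_set V E a v = {}"
  shows "a \<in> interval V E u v"
proof -
  obtain m where m: "m \<in> interval V E a u" "m \<in> interval V E u v" "m \<in> interval V E v a"
    using median_exists V by blast
  have mV: "m \<in> V" using m interval_dist by blast
  have "m = a"
  proof (rule ccontr)
    assume "m \<noteq> a"
    then obtain k where k: "d m a = Suc k" using dist_eq_0_imp_eq mV V by (cases "d m a") auto
    obtain x where x: "E x a" "d m x = k" using dist_Suc_imp_predecessor[OF mV V(1) k] by blast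
    have ax: "E a x" using x E_sym by blast
    have "d x m < d a m"
      using x(2) k dist_commute[OF mV E_in_V(1)[OF x(1)]] dist_commute[OF mV V(1)] by simp
    have beyond_m: "\<not> d a w < d x w" if "w \<in> V" "d a m + d m w = d a w" for w
      using dist_triangle[of x m w] \<open>d x m < d a m\<close> that mV E_in_V[OF ax] by linarith
    have "d v m + d m a = d v a" using m(3) interval_dist by blast
    then have "d a m + d m v = d a v"
      using dist_commute[OF V(3) mV] dist_commute[OF mV V(1)] dist_commute[OF V(3,1)] by simp
    moreover have "d a m + d m u = d a u" using m(1) interval_dist by blast
    ultimately show False
      using disjoint Theta_class_in_ladder_set[OF ax] beyond_m V by blast
  qed
  with m show ?thesis by simp
qed

end

theorem mainTheorem12:
  fixes V :: "'a set" and E :: "'a \<Rightarrow> 'a \<Rightarrow> bool" and v0 u v :: 'a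
  assumes "in_U3 V E"
    and "card V \<ge> 3"
    and "v0 \<in> V"
    and "\<forall>F \<in> theta_classes E. \<forall>H. majority_halfspace V E F H \<longrightarrow> v0 \<in> H"
    and "u \<in> V" and "v \<in> V" and "u \<noteq> v0" and "v \<noteq> v0"
    and "ladder_set V E v0 u \<inter> ladder_set V E v0 v = {}"
  shows "v0 \<in> interval V E u v \<and> dist E u v = dist E u v0 + dist E v0 v"
proof -
  interpret median V E using assms(1) by unfold_locales (simp add: in_U3_def)
  have "v0 \<in> interval V E u v"
    using in_interval_if_ladder_sets_disjoint assms(3,5,6,9) by blast
  then show ?thesis by (simp add: interval_def)
qed

end
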